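(* Let $\mathbf A\in\mathcal S_{++}^n$, $\tau>0$, and fix $\mathbf W\in\mathbb R^{k\times n}$. Let $t\mapsto\mathbf M(t)\in\mathcal S_{++}^k$ be a continuously differentiable solution of $$\tau\tfrac{d\mathbf M}{dt}=\mathbf M^{-1}\mathbf W\mathbf A\mathbf W^\top\mathbf M^{-1}-\mathbf M.$$ Then, with $L_0(\mathbf W,\mathbf M):=\|\mathbf W\mathbf A\mathbf W^\top-\mathbf M^3\|^2$, the following identity holds: $$\tau\frac{d}{dt}L_0(\mathbf W,\mathbf M(t))=-4\big\|\mathbf M^{1/2}(\mathbf W\mathbf A\mathbf W^\top-\mathbf M^3)\mathbf M^{-1/2}\big\|^2-2L_0(\mathbf W,\mathbf M(t)),$$ where $\mathbf M=\mathbf M(t)$ on the right-hand side. In particular $\tau\frac{d}{dt}L_0\le-2L_0$, so $L_0(\mathbf W,\mathbf M(t))\le L_0(\mathbf W,\mathbf M(0))e^{-2t/\tau}$.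
   Context: Let $n>k\ge1$ be integers. $\mathcal S_{++}^m$ denotes the $m\times m$ symmetric positive definite matrices, and $\mathbf A\in\mathcal S_{++}^n$. $\|\cdot\|$ is the Frobenius norm, and $\mathbf M^{1/2}$ is the positive definite square root. *)

theory Defs
  imports "HOL-Analysis.Analysis"
begin

definition spd :: "real^'m^'m \<Rightarrow> bool" where
  "spd M \<longleftrightarrow> transpose M = M \<and> (\<forall>x. x \<noteq> 0 \<longrightarrow> x \<bullet> (M *v x) > 0)"

definition pd_sqrt :: "real^'m^'m \<Rightarrow> real^'m^'m" where
  "pd_sqrt M = (THE S. spd S \<and> S ** S = M)"

definition frob :: "real^'c^'r \<Rightarrow> real" where
  "frob X = sqrt (\<Sum>i\<in>UNIV. \<Sum>j\<in>UNIV. (X $ i $ j)^2)"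

definition L0 :: "real^'n^'n \<Rightarrow> real^'n^'k \<Rightarrow> real^'k^'k \<Rightarrow> real" where
  "L0 A W M = (frob (W ** A ** transpose W - M ** M ** M))^2"

end

theory Submission
  imports Defs
begin

(* Write E = W A W^T - M^3. The flow says tau M' = M^-1 E M^-1, hence
   tau (M^3)' = M E M^-1 + E + M^-1 E M, and pairing with E gives
   tau d/dt |E|^2 = -2 |E|^2 - 4 tr (E M E M^-1), where the trace is |M^1/2 E M^-1/2|^2.
   So tau L0' <= -2 L0, and the exponential bound is Gronwall's inequality.
   The square root M^1/2 exists by the spectral theorem for symmetric matrices
   (an eigenvector is found by maximising the Rayleigh quotient) and is unique
   by a trace argument. *)

lemma matrix_add_rdistrib: "(A + B) ** C = A ** C + B ** C"
  for A B :: "'a::semiring_1^'n^'m"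
  by (simp add: matrix_matrix_mult_def vec_eq_iff sum.distrib[symmetric] algebra_simps)

lemma matrix_diff_ldistrib: "A ** (B - C) = A ** B - A ** C"
  for A :: "'a::ring_1^'n^'m"
  by (simp add: matrix_matrix_mult_def vec_eq_iff sum_subtractf[symmetric] algebra_simps)

lemma matrix_diff_rdistrib: "(A - B) ** C = A ** C - B ** C"
  for A B :: "'a::ring_1^'n^'m"
  by (simp add: matrix_matrix_mult_def vec_eq_iff sum_subtractf[symmetric] algebra_simps)

lemma transpose_diff: "transpose (A - B) = transpose A - transpose B"
  for A B :: "'a::ab_group_add^'n^'m"
  by (simp add: transpose_def vec_eq_iff)

lemma bounded_bilinear_matrix_matrix_mult:
  "bounded_bilinear ((**) :: real^'n^'m \<Rightarrow> real^'p^'n \<Rightarrow> real^'p^'m)"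
proof -
  have "bilinear ((**) :: real^'n^'m \<Rightarrow> real^'p^'n \<Rightarrow> real^'p^'m)"
    by (simp add: bilinear_def linear_iff matrix_add_ldistrib matrix_add_rdistrib
        matrix_scalar_ac scalar_matrix_assoc[symmetric])
  then show ?thesis
    by (simp add: bilinear_conv_bounded_bilinear)
qed

lemma inner_matrix_eq_trace: "X \<bullet> Y = trace (transpose X ** Y)"
  for X Y :: "real^'n^'m"
  unfolding inner_vec_def trace_def matrix_matrix_mult_def transpose_def
  by simp (rule sum.swap)

lemma frob_power2: "(frob X)^2 = X \<bullet> X"
proof -
  have "0 \<le> (\<Sum>i\<in>UNIV. \<Sum>j\<in>UNIV. (X $ i $ j)^2)"
    by (intro sum_nonneg) auto
  then show ?thesis
    by (simp add: frob_def inner_vec_def power2_eq_square)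
qed

lemma
  assumes "invertible A"
  shows matrix_inv_right: "A ** matrix_inv A = mat 1"
    and matrix_inv_left: "matrix_inv A ** A = mat 1"
proof -
  have "\<exists>A'. A ** A' = mat 1 \<and> A' ** A = mat 1"
    using assms unfolding invertible_def .
  from someI_ex[OF this] show "A ** matrix_inv A = mat 1" "matrix_inv A ** A = mat 1"
    unfolding matrix_inv_def by auto
qed

lemma matrix_inv_unique:
  assumes "B ** A = mat 1" and "invertible A"
  shows "matrix_inv A = B"
proof -
  have "matrix_inv A = (B ** A) ** matrix_inv A"
    using assms(1) by simp
  also have "\<dots> = B"
    by (simp add: matrix_mul_assoc[symmetric] matrix_inv_right[OF assms(2)])
  finally show ?thesis .
qed

lemma transpose_matrix_inv_symmetric:
  fixes S :: "'a::comm_semiring_1^'n^'n"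
  assumes "transpose S = S" and "invertible S"
  shows "transpose (matrix_inv S) = matrix_inv S"
proof -
  have "transpose (matrix_inv S) ** S = transpose (S ** matrix_inv S)"
    using assms(1) by (simp add: matrix_transpose_mul)
  also have "\<dots> = mat 1"
    by (simp add: matrix_inv_right[OF assms(2)])
  finally have "matrix_inv S = transpose (matrix_inv S)"
    by (rule matrix_inv_unique[OF _ assms(2)])
  then show ?thesis
    by simp
qed

lemma spd_symmetric: "spd M \<Longrightarrow> transpose M = M"
  and spd_pos: "spd M \<Longrightarrow> x \<noteq> 0 \<Longrightarrow> 0 < x \<bullet> (M *v x)"
  unfolding spd_def by blast+

lemma spd_invertible:
  assumes "spd M"
  shows "invertible M"
proof -
  have "\<forall>x. M *v x = 0 \<longrightarrow> x = 0"
    using spd_pos[OF assms] by fastforce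
  then have "\<exists>B. B ** M = mat 1"
    by (simp only: matrix_left_invertible_ker)
  then show ?thesis
    by (simp only: invertible_left_inverse)
qed

section \<open>Spectral theorem for symmetric matrices\<close>

lemma symmetric_matrix_inner_commute:
  fixes A :: "real^'m^'m"
  assumes "transpose A = A"
  shows "x \<bullet> (A *v y) = (A *v x) \<bullet> y"
  by (metis assms dot_lmul_matrix transpose_matrix_vector)

lemma nonneg_quadratic_imp_linear_coeff_zero:
  fixes a b :: real
  assumes "\<And>t. 0 \<le> a * t + b * t^2"
  shows "a = 0"
proof (rule ccontr)
  assume "a \<noteq> 0"
  define c where "c = \<bar>b\<bar> + 1"
  define t where "t = - a / c"
  have "c > 0" and b: "\<bar>b\<bar> = c - 1"
    by (simp_all add: c_def)
  have "a * t + b * t^2 \<le> a * t + (c - 1) * t^2"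
    unfolding b[symmetric] by (simp add: mult_right_mono)
  also have "\<dots> = - (a^2 / c^2)"
    using \<open>c > 0\<close> by (simp add: t_def field_simps power2_eq_square)
  also have "\<dots> < 0"
    using \<open>a \<noteq> 0\<close> \<open>c > 0\<close> by simp
  finally show False
    using assms[of t] by linarith
qed

lemma rayleigh_quotient_attains_max:
  fixes A :: "real^'m^'m"
  assumes V: "subspace V" and nontriv: "V \<noteq> {0}"
  obtains v where "v \<in> V" "v \<bullet> v = 1" "\<And>x. x \<in> V \<Longrightarrow> x \<bullet> (A *v x) \<le> (v \<bullet> (A *v v)) * (x \<bullet> x)"
proof -
  let ?K = "V \<inter> sphere 0 1"
  have "compact ?K"
    by (intro closed_Int_compact closed_subspace V compact_sphere)
  obtain u where "u \<in> V" "u \<noteq> 0"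
    using nontriv V subspace_0 by blast
  then have "u /\<^sub>R norm u \<in> ?K"
    using V by (simp add: subspace_scale)
  then have "?K \<noteq> {}"
    by blast
  moreover have "continuous_on ?K (\<lambda>x. x \<bullet> (A *v x))"
    by (intro continuous_intros continuous_on_id
        bounded_linear.continuous_on[OF matrix_vector_mul_bounded_linear])
  ultimately obtain v where "v \<in> ?K" and vmax: "\<And>x. x \<in> ?K \<Longrightarrow> x \<bullet> (A *v x) \<le> v \<bullet> (A *v v)"
    using continuous_attains_sup[OF \<open>compact ?K\<close>] by blast
  moreover have "x \<bullet> (A *v x) \<le> (v \<bullet> (A *v v)) * (x \<bullet> x)" if "x \<in> V" for x
  proof (cases "x = 0")
    case False
    have "x /\<^sub>R norm x \<in> ?K"
      using that False V by (simp add: subspace_scale)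
    moreover have "(x /\<^sub>R norm x) \<bullet> (A *v (x /\<^sub>R norm x)) = (x \<bullet> (A *v x)) / (norm x)^2"
      by (simp add: matrix_vector_mult_scaleR power2_eq_square field_simps)
    ultimately have "(x \<bullet> (A *v x)) / (norm x)^2 \<le> v \<bullet> (A *v v)"
      using vmax by metis
    then show ?thesis
      using False by (simp add: divide_le_eq power2_norm_eq_inner mult.commute)
  qed simp
  ultimately show ?thesis
    using that by (auto simp: norm_eq_1)
qed

(* With l = v . A v maximal, q x = l |x|^2 - x . A x is nonnegative on V and vanishes at v;
   expanding q (v + t w) with w = l v - A v shows w = 0. *)
lemma symmetric_matrix_eigenvector_in_invariant_subspace:
  fixes A :: "real^'m^'m"
  assumes sym: "transpose A = A" and V: "subspace V"
    and inv: "\<And>x. x \<in> V \<Longrightarrow> A *v x \<in> V" and nontriv: "V \<noteq> {0}"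
  obtains v c where "v \<in> V" "norm v = 1" "A *v v = c *\<^sub>R v"
proof -
  obtain v where vV: "v \<in> V" and vv: "v \<bullet> v = 1"
    and vmax: "\<And>x. x \<in> V \<Longrightarrow> x \<bullet> (A *v x) \<le> (v \<bullet> (A *v v)) * (x \<bullet> x)"
    using rayleigh_quotient_attains_max[OF V nontriv] by blast
  define l where "l = v \<bullet> (A *v v)"
  define q where "q x = l * (x \<bullet> x) - x \<bullet> (A *v x)" for x
  have q_nonneg: "0 \<le> q x" if "x \<in> V" for x
    using vmax[OF that] by (simp add: q_def l_def mult.commute)
  define w where "w = l *\<^sub>R v - A *v v"
  have wV: "w \<in> V"
    unfolding w_def by (intro subspace_diff[OF V] subspace_scale[OF V] vV inv)
  have "q (v + t *\<^sub>R w) = 2 * (l * (v \<bullet> w) - w \<bullet> (A *v v)) * t + q w * t^2" for t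
    using symmetric_matrix_inner_commute[OF sym, of v w]
    by (simp add: q_def l_def vv matrix_vector_right_distrib matrix_vector_mult_scaleR
        inner_add_left inner_add_right inner_commute power2_eq_square algebra_simps)
  moreover have "w \<bullet> w = l * (v \<bullet> w) - w \<bullet> (A *v v)"
    by (subst (2) w_def) (simp add: inner_diff_right inner_commute)
  ultimately have "q (v + t *\<^sub>R w) = 2 * (w \<bullet> w) * t + q w * t^2" for t
    by simp
  then have "2 * (w \<bullet> w) = 0"
    using q_nonneg vV wV V
    by (intro nonneg_quadratic_imp_linear_coeff_zero[of _ "q w"])
      (metis subspace_add subspace_scale)
  then have "A *v v = l *\<^sub>R v"
    by (simp add: w_def)
  then show ?thesis
    using that vV vv by (simp add: norm_eq_1)
qed

lemma span_insert_orthogonal_complement: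
  assumes V: "subspace V" and v: "v \<in> V" "v \<bullet> v = 1"
    and B: "span B = {x \<in> V. v \<bullet> x = 0}"
  shows "span (insert v B) = V"
proof
  have "B \<subseteq> V"
    using B span_superset by blast
  then show "span (insert v B) \<subseteq> V"
    using V v by (intro span_minimal) auto
next
  show "V \<subseteq> span (insert v B)"
  proof
    fix x
    assume "x \<in> V"
    then have "x - (v \<bullet> x) *\<^sub>R v \<in> span B"
      using V v by (simp add: B inner_diff_right subspace_diff subspace_scale)
    then have "x - (v \<bullet> x) *\<^sub>R v \<in> span (insert v B)"
      using span_mono[of B "insert v B"] by blast
    moreover have "(v \<bullet> x) *\<^sub>R v \<in> span (insert v B)"
      by (intro span_mul span_base) simp
    ultimately show "x \<in> span (insert v B)"
      by (metis diff_add_cancel span_add)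
  qed
qed

lemma symmetric_matrix_eigenbasis_of_invariant_subspace:
  fixes A :: "real^'m^'m"
  assumes sym: "transpose A = A"
  shows "subspace V \<Longrightarrow> (\<forall>x\<in>V. A *v x \<in> V) \<Longrightarrow>
    \<exists>B\<subseteq>V. pairwise orthogonal B \<and> (\<forall>v\<in>B. norm v = 1 \<and> (\<exists>c. A *v v = c *\<^sub>R v)) \<and> span B = V"
proof (induction "dim V" arbitrary: V rule: less_induct)
  case less
  show ?case
  proof (cases "V = {0}")
    case True
    then show ?thesis
      by (intro exI[of _ "{}"]) auto
  next
    case False
    obtain v c where vV: "v \<in> V" and vn: "norm v = 1" and Av: "A *v v = c *\<^sub>R v"
      using symmetric_matrix_eigenvector_in_invariant_subspace[OF sym less.prems(1)] less.prems(2) False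
      by blast
    have vv: "v \<bullet> v = 1"
      using vn by (simp add: norm_eq_1)
    define V' where "V' = {x \<in> V. v \<bullet> x = 0}"
    have V': "subspace V'"
      using less.prems(1) by (auto simp: V'_def subspace_def inner_add_right)
    have inv': "\<forall>x\<in>V'. A *v x \<in> V'"
      using less.prems(2) by (simp add: V'_def symmetric_matrix_inner_commute[OF sym] Av)
    have "v \<notin> V'"
      using vv by (simp add: V'_def)
    then have "V' \<subset> V"
      using vV unfolding V'_def by blast
    then have "dim V' < dim V"
      using V' less.prems(1) by (metis dim_psubset span_eq_iff)
    then obtain B' where B': "B' \<subseteq> V'" "pairwise orthogonal B'"
        "\<forall>v\<in>B'. norm v = 1 \<and> (\<exists>c. A *v v = c *\<^sub>R v)" "span B' = V'"
      using less.hyps V' inv' by blast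
    have "insert v B' \<subseteq> V"
      using B'(1) vV by (auto simp: V'_def)
    moreover have "pairwise orthogonal (insert v B')"
      using B'(1,2) by (auto simp: pairwise_insert V'_def orthogonal_def inner_commute)
    moreover have "span (insert v B') = V"
      using span_insert_orthogonal_complement[OF less.prems(1) vV vv] B'(4) by (simp add: V'_def)
    ultimately show ?thesis
      using B'(3) vn Av by blast
  qed
qed

lemma orthonormal_inner_sum:
  fixes B :: "'a::real_inner set"
  assumes "finite B" "pairwise orthogonal B" "u \<in> B" "norm u = 1"
  shows "u \<bullet> (\<Sum>v\<in>B. a v *\<^sub>R v) = a u"
proof -
  have "(\<Sum>v\<in>B - {u}. a v * (u \<bullet> v)) = 0"
    using assms(2,3) by (intro sum.neutral) (auto simp: pairwise_def orthogonal_def)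
  moreover have "u \<bullet> u = 1"
    using assms(4) by (simp add: norm_eq_1)
  moreover have "u \<bullet> (\<Sum>v\<in>B. a v *\<^sub>R v) = a u * (u \<bullet> u) + (\<Sum>v\<in>B - {u}. a v * (u \<bullet> v))"
    using assms(1,3) by (simp add: inner_sum_right inner_add_right sum.remove)
  ultimately show ?thesis
    by simp
qed

lemma orthonormal_basis_expansion:
  fixes B :: "'a::euclidean_space set"
  assumes orth: "pairwise orthogonal B" and unit: "\<forall>v\<in>B. norm v = 1" and span: "span B = UNIV"
  shows "x = (\<Sum>v\<in>B. (v \<bullet> x) *\<^sub>R v)"
proof -
  define y where "y = x - (\<Sum>v\<in>B. (v \<bullet> x) *\<^sub>R v)"
  have "orthogonal y u" if "u \<in> B" for u
  proof -
    have "u \<bullet> y = 0"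
      using orthonormal_inner_sum[OF pairwise_orthogonal_imp_finite[OF orth] orth that, of "\<lambda>v. v \<bullet> x"]
        unit that
      by (simp add: y_def inner_diff_right)
    then show ?thesis
      by (simp add: orthogonal_def inner_commute)
  qed
  then have "orthogonal y y"
    using span orthogonal_to_span by blast
  then show ?thesis
    by (simp add: y_def orthogonal_def)
qed

definition outer_sum :: "(real^'m \<Rightarrow> real) \<Rightarrow> (real^'m) set \<Rightarrow> real^'m^'m" where
  "outer_sum c B = (\<chi> i j. \<Sum>v\<in>B. c v * v $ i * v $ j)"

lemma outer_sum_cong: "(\<And>v. v \<in> B \<Longrightarrow> c v = d v) \<Longrightarrow> outer_sum c B = outer_sum d B"
  by (auto simp: outer_sum_def vec_eq_iff intro!: sum.cong)

lemma transpose_outer_sum: "transpose (outer_sum c B) = outer_sum c B"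
  unfolding outer_sum_def transpose_def by (simp add: vec_eq_iff mult_ac)

lemma outer_sum_mult_vector: "outer_sum c B *v x = (\<Sum>v\<in>B. (c v * (v \<bullet> x)) *\<^sub>R v)"
proof -
  have "(outer_sum c B *v x) $ i = (\<Sum>v\<in>B. (c v * (v \<bullet> x)) *\<^sub>R v) $ i" for i
  proof -
    have "(outer_sum c B *v x) $ i = (\<Sum>j\<in>UNIV. \<Sum>v\<in>B. c v * v $ i * v $ j * x $ j)"
      by (simp add: outer_sum_def matrix_vector_mult_def sum_distrib_right)
    also have "\<dots> = (\<Sum>v\<in>B. (c v * (v \<bullet> x)) * v $ i)"
      by (subst sum.swap) (simp add: inner_vec_def sum_distrib_left mult_ac)
    finally show ?thesis
      by (simp add: sum_component)
  qed
  then show ?thesis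
    by (simp add: vec_eq_iff)
qed

lemma outer_sum_mult:
  assumes "finite B" "pairwise orthogonal B" "\<forall>v\<in>B. norm v = 1"
  shows "outer_sum c B ** outer_sum d B = outer_sum (\<lambda>v. c v * d v) B"
proof -
  have coeff: "v \<bullet> (outer_sum d B *v x) = d v * (v \<bullet> x)" if "v \<in> B" for v x
    unfolding outer_sum_mult_vector
    by (rule orthonormal_inner_sum[OF assms(1,2) that]) (use assms(3) that in blast)
  have "(outer_sum c B ** outer_sum d B) *v x = outer_sum (\<lambda>v. c v * d v) B *v x" for x
  proof -
    have "(outer_sum c B ** outer_sum d B) *v x = outer_sum c B *v (outer_sum d B *v x)"
      by (simp add: matrix_vector_mul_assoc)
    also have "\<dots> = (\<Sum>v\<in>B. (c v * (d v * (v \<bullet> x))) *\<^sub>R v)"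
      unfolding outer_sum_mult_vector[of c] by (intro sum.cong) (simp_all add: coeff)
    also have "\<dots> = outer_sum (\<lambda>v. c v * d v) B *v x"
      by (simp add: outer_sum_mult_vector mult.assoc)
    finally show ?thesis .
  qed
  then show ?thesis
    by (simp add: matrix_eq)
qed

lemma eigenbasis_eq_outer_sum:
  fixes M :: "real^'m^'m"
  assumes orth: "pairwise orthogonal B" and unit: "\<forall>v\<in>B. norm v = 1" and span: "span B = UNIV"
    and eig: "\<And>v. v \<in> B \<Longrightarrow> M *v v = l v *\<^sub>R v"
  shows "M = outer_sum l B"
proof -
  have "M *v x = outer_sum l B *v x" for x
  proof -
    have "M *v x = M *v (\<Sum>v\<in>B. (v \<bullet> x) *\<^sub>R v)"
      by (rule arg_cong[OF orthonormal_basis_expansion[OF orth unit span]])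
    also have "\<dots> = (\<Sum>v\<in>B. (l v * (v \<bullet> x)) *\<^sub>R v)"
      by (simp add: linear_sum[OF matrix_vector_mul_linear] matrix_vector_mult_scaleR eig
          mult.commute cong: sum.cong)
    finally show ?thesis
      by (simp add: outer_sum_mult_vector)
  qed
  then show ?thesis
    by (simp add: matrix_eq)
qed

lemma spd_outer_sum:
  fixes B :: "(real^'m) set"
  assumes orth: "pairwise orthogonal B" and unit: "\<forall>v\<in>B. norm v = 1" and span: "span B = UNIV"
    and pos: "\<And>v. v \<in> B \<Longrightarrow> 0 < c v"
  shows "spd (outer_sum c B)"
  unfolding spd_def
proof (intro conjI allI impI)
  show "transpose (outer_sum c B) = outer_sum c B"
    by (rule transpose_outer_sum)
next
  fix x :: "real^'m"
  assume "x \<noteq> 0"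
  have "\<exists>u\<in>B. u \<bullet> x \<noteq> 0"
  proof (rule ccontr)
    assume "\<not> (\<exists>u\<in>B. u \<bullet> x \<noteq> 0)"
    then have "(\<Sum>v\<in>B. (v \<bullet> x) *\<^sub>R v) = 0"
      by simp
    then show False
      using orthonormal_basis_expansion[OF orth unit span, of x] \<open>x \<noteq> 0\<close> by simp
  qed
  then obtain u where "u \<in> B" "u \<bullet> x \<noteq> 0" ..
  have "0 < (\<Sum>v\<in>B. c v * (v \<bullet> x)^2)"
  proof (rule sum_pos2[where i=u])
    show "0 < c u * (u \<bullet> x)^2"
      using pos[OF \<open>u \<in> B\<close>] \<open>u \<bullet> x \<noteq> 0\<close> by simp
    show "0 \<le> c v * (v \<bullet> x)^2" if "v \<in> B" for v
      using pos[OF that] by simp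
  qed (use pairwise_orthogonal_imp_finite[OF orth] \<open>u \<in> B\<close> in simp_all)
  then show "0 < x \<bullet> (outer_sum c B *v x)"
    by (simp add: outer_sum_mult_vector inner_sum_right power2_eq_square inner_commute mult_ac)
qed

lemma symmetric_matrix_spectral_decomposition:
  fixes M :: "real^'m^'m"
  assumes "transpose M = M"
  obtains B l where "pairwise orthogonal B" "\<forall>v\<in>B. norm v = 1" "span B = UNIV"
    "\<And>v. v \<in> B \<Longrightarrow> M *v v = l v *\<^sub>R v" "M = outer_sum l B"
proof -
  obtain B where orth: "pairwise orthogonal B" and unit: "\<forall>v\<in>B. norm v = 1"
    and eig: "\<forall>v\<in>B. \<exists>c. M *v v = c *\<^sub>R v" and span: "span B = UNIV"
    using symmetric_matrix_eigenbasis_of_invariant_subspace[OF assms, of UNIV] by auto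
  define l where "l v = (SOME c. M *v v = c *\<^sub>R v)" for v
  have l_eig: "M *v v = l v *\<^sub>R v" if "v \<in> B" for v
  proof -
    have "\<exists>c. M *v v = c *\<^sub>R v"
      using eig that by blast
    then show ?thesis
      unfolding l_def by (rule someI_ex)
  qed
  show ?thesis
    by (rule that[OF orth unit span l_eig eigenbasis_eq_outer_sum[OF orth unit span l_eig]])
qed

section \<open>The positive definite square root\<close>

lemma row_matrix_matrix_mult: "(X ** S) $ i = X $ i v* S"
  by (simp add: vec_eq_iff matrix_matrix_mult_def vector_matrix_mult_def)

lemma spd_inner_matrix_mult_pos:
  fixes X :: "real^'m^'r"
  assumes "spd S" and "X \<noteq> 0"
  shows "0 < X \<bullet> (X ** S)"
proof -
  have rows: "X $ j \<bullet> (X ** S) $ j = X $ j \<bullet> (S *v X $ j)" for j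
  proof -
    have "(X ** S) $ j = transpose S *v X $ j"
      by (simp add: row_matrix_matrix_mult)
    then show ?thesis
      by (simp add: spd_symmetric[OF assms(1)])
  qed
  obtain i where "X $ i \<noteq> 0"
    using assms(2) by (auto simp: vec_eq_iff)
  then have pos: "0 < X $ i \<bullet> (S *v X $ i)"
    by (rule spd_pos[OF assms(1)])
  have nonneg: "0 \<le> X $ j \<bullet> (S *v X $ j)" for j
    using spd_pos[OF assms(1), of "X $ j"] by (cases "X $ j = 0") auto
  have "0 < (\<Sum>j\<in>UNIV. X $ j \<bullet> (S *v X $ j))"
    by (rule sum_pos2[where i=i]) (use pos nonneg in auto)
  then show ?thesis
    by (simp only: inner_vec_def[of X "X ** S"] rows)
qed

(* With D = S - T one has D S + T D = S^2 - T^2 = 0; pairing with D gives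
   tr (D S D) + tr (D T D) = 0, and both traces are positive unless D = 0. *)
lemma spd_sqrt_unique:
  fixes S T :: "real^'m^'m"
  assumes S: "spd S" and T: "spd T" and eq: "S ** S = T ** T"
  shows "S = T"
proof (rule ccontr)
  define D where "D = S - T"
  assume "S \<noteq> T"
  then have "D \<noteq> 0"
    by (simp add: D_def)
  have symD: "transpose D = D"
    by (simp add: D_def transpose_diff spd_symmetric S T)
  have "D ** S + T ** D = 0"
    using eq by (simp add: D_def matrix_diff_ldistrib matrix_diff_rdistrib matrix_mul_assoc)
  then have "D \<bullet> (D ** S) + D \<bullet> (T ** D) = 0"
    by (metis inner_add_right inner_zero_right)
  moreover have "D \<bullet> (T ** D) = D \<bullet> (D ** T)"
  proof -
    have "trace (D ** (T ** D)) = trace ((D ** T) ** D)"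
      by (simp add: matrix_mul_assoc)
    also have "\<dots> = trace (D ** (D ** T))"
      by (rule trace_mul_sym)
    finally show ?thesis
      unfolding inner_matrix_eq_trace symD .
  qed
  moreover have "0 < D \<bullet> (D ** S)" "0 < D \<bullet> (D ** T)"
    using spd_inner_matrix_mult_pos \<open>D \<noteq> 0\<close> S T by blast+
  ultimately show False
    by linarith
qed

lemma spd_sqrt_exists:
  fixes M :: "real^'m^'m"
  assumes "spd M"
  shows "\<exists>S. spd S \<and> S ** S = M"
proof -
  obtain B l where orth: "pairwise orthogonal B" and unit: "\<forall>v\<in>B. norm v = 1"
    and span: "span B = UNIV" and eig: "\<And>v. v \<in> B \<Longrightarrow> M *v v = l v *\<^sub>R v"
    and M: "M = outer_sum l B"
    using symmetric_matrix_spectral_decomposition[OF spd_symmetric[OF assms]] by blast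
  have l_pos: "0 < l v" if "v \<in> B" for v
  proof -
    have "v \<bullet> v = 1" "v \<noteq> 0"
      using unit that by (auto simp: norm_eq_1)
    then show ?thesis
      using spd_pos[OF assms, of v] eig[OF that] by simp
  qed
  define S where "S = outer_sum (\<lambda>v. sqrt (l v)) B"
  have "S ** S = outer_sum (\<lambda>v. sqrt (l v) * sqrt (l v)) B"
    unfolding S_def by (rule outer_sum_mult[OF pairwise_orthogonal_imp_finite[OF orth] orth unit])
  also have "\<dots> = M"
    unfolding M using l_pos by (intro outer_sum_cong) (simp add: less_imp_le)
  finally have "S ** S = M" .
  moreover have "spd S"
    unfolding S_def using l_pos by (intro spd_outer_sum[OF orth unit span]) simp
  ultimately show ?thesis
    by blast
qed

lemma
  fixes M :: "real^'m^'m"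
  assumes "spd M"
  shows spd_pd_sqrt: "spd (pd_sqrt M)"
    and pd_sqrt_square: "pd_sqrt M ** pd_sqrt M = M"
proof -
  obtain S where S: "spd S" "S ** S = M"
    using spd_sqrt_exists[OF assms] by blast
  have "\<exists>!S. spd S \<and> S ** S = M"
  proof (rule ex1I[of _ S])
    show "spd S \<and> S ** S = M"
      using S by blast
    show "T = S" if "spd T \<and> T ** T = M" for T
      using spd_sqrt_unique[of T S] that S by simp
  qed
  from theI'[OF this] show "spd (pd_sqrt M)" "pd_sqrt M ** pd_sqrt M = M"
    unfolding pd_sqrt_def by auto
qed

lemma matrix_inv_pd_sqrt_square:
  fixes X :: "real^'m^'m"
  assumes "spd X"
  shows "matrix_inv (pd_sqrt X) ** matrix_inv (pd_sqrt X) = matrix_inv X"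
proof -
  let ?S = "pd_sqrt X"
  have inv: "matrix_inv ?S ** ?S = mat 1"
    by (rule matrix_inv_left[OF spd_invertible[OF spd_pd_sqrt[OF assms]]])
  have "(matrix_inv ?S ** matrix_inv ?S) ** X = (matrix_inv ?S ** matrix_inv ?S) ** (?S ** ?S)"
    by (simp only: pd_sqrt_square[OF assms])
  also have "\<dots> = matrix_inv ?S ** (matrix_inv ?S ** ?S) ** ?S"
    by (simp add: matrix_mul_assoc)
  also have "\<dots> = mat 1"
    by (simp add: inv)
  finally show ?thesis
    by (rule matrix_inv_unique[OF _ spd_invertible[OF assms], symmetric])
qed

lemma frob_conj_pd_sqrt_power2:
  fixes X E :: "real^'m^'m"
  assumes X: "spd X" and E: "transpose E = E"
  shows "(frob (pd_sqrt X ** E ** matrix_inv (pd_sqrt X)))^2 = trace (E ** X ** E ** matrix_inv X)"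
proof -
  define S where "S = pd_sqrt X"
  define Si where "Si = matrix_inv S"
  have "spd S"
    unfolding S_def by (rule spd_pd_sqrt[OF X])
  then have symS: "transpose S = S" and symSi: "transpose Si = Si"
    unfolding Si_def by (simp_all add: spd_symmetric transpose_matrix_inv_symmetric spd_invertible)
  have "(frob (S ** E ** Si))^2 = trace ((Si ** E ** S) ** (S ** E ** Si))"
    by (simp add: frob_power2 inner_matrix_eq_trace matrix_transpose_mul symS symSi E matrix_mul_assoc)
  also have "\<dots> = trace (Si ** ((E ** S ** S ** E) ** Si))"
    by (simp add: matrix_mul_assoc)
  also have "\<dots> = trace ((E ** S ** S ** E) ** Si ** Si)"
    by (subst trace_mul_sym) (simp add: matrix_mul_assoc)
  also have "\<dots> = trace (E ** X ** E ** matrix_inv X)"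
  proof -
    have "Z ** S ** S = Z ** X" "Z ** Si ** Si = Z ** matrix_inv X" for Z :: "real^'m^'m"
      unfolding S_def Si_def
      by (simp_all add: matrix_mul_assoc[symmetric] pd_sqrt_square[OF X] matrix_inv_pd_sqrt_square[OF X])
    then show ?thesis
      by (simp add: matrix_mul_assoc)
  qed
  finally show ?thesis
    by (simp add: S_def Si_def)
qed

section \<open>Decay of the loss along the flow\<close>

lemma cube_flow_energy_identity:
  fixes X Y C :: "real^'m^'m" and \<tau> :: real
  assumes X: "spd X" and C: "transpose C = C"
    and flow: "\<tau> *\<^sub>R Y = matrix_inv X ** C ** matrix_inv X - X"
  defines "E \<equiv> C - X ** X ** X"
  shows "\<tau> * (- 2 * (E \<bullet> (X ** X ** Y + X ** Y ** X + Y ** X ** X))) =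
    - 4 * (frob (pd_sqrt X ** E ** matrix_inv (pd_sqrt X)))^2 - 2 * (frob E)^2"
proof -
  define Xi where "Xi = matrix_inv X"
  have XXi: "X ** Xi = mat 1" and XiX: "Xi ** X = mat 1"
    unfolding Xi_def using spd_invertible[OF X] by (simp_all add: matrix_inv_right matrix_inv_left)
  have XXiR: "Z ** X ** Xi = Z" and XiXR: "Z ** Xi ** X = Z" for Z :: "real^'m^'m"
    by (simp_all add: matrix_mul_assoc[symmetric] XXi XiX)
  have symE: "transpose E = E"
    by (simp add: E_def transpose_diff matrix_transpose_mul C spd_symmetric[OF X] matrix_mul_assoc)
  have "Xi ** E ** Xi = Xi ** C ** Xi - X"
    by (simp add: E_def matrix_diff_ldistrib matrix_diff_rdistrib matrix_mul_assoc XiX XXiR)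
  then have Y: "\<tau> *\<^sub>R Y = Xi ** E ** Xi"
    using flow by (simp add: Xi_def)
  have "\<tau> *\<^sub>R (X ** X ** Y + X ** Y ** X + Y ** X ** X) =
      X ** X ** (\<tau> *\<^sub>R Y) + X ** (\<tau> *\<^sub>R Y) ** X + (\<tau> *\<^sub>R Y) ** X ** X"
    by (simp add: scaleR_right_distrib matrix_scalar_ac scalar_matrix_assoc)
  also have "\<dots> = X ** E ** Xi + E + Xi ** E ** X"
    unfolding Y by (simp add: matrix_mul_assoc XXiR XiXR XXi XiX)
  finally have dcube: "\<tau> *\<^sub>R (X ** X ** Y + X ** Y ** X + Y ** X ** X) = X ** E ** Xi + E + Xi ** E ** X" .
  have outer1: "E \<bullet> (X ** E ** Xi) = trace (E ** X ** E ** Xi)"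
    by (simp add: inner_matrix_eq_trace symE matrix_mul_assoc)
  have "E \<bullet> (Xi ** E ** X) = trace ((E ** Xi) ** (E ** X))"
    by (simp add: inner_matrix_eq_trace symE matrix_mul_assoc)
  also have "\<dots> = trace (E ** X ** E ** Xi)"
    by (subst trace_mul_sym) (simp add: matrix_mul_assoc)
  finally have outer2: "E \<bullet> (Xi ** E ** X) = trace (E ** X ** E ** Xi)" .
  have "\<tau> * (- 2 * (E \<bullet> (X ** X ** Y + X ** Y ** X + Y ** X ** X))) =
      - 2 * (E \<bullet> (\<tau> *\<^sub>R (X ** X ** Y + X ** Y ** X + Y ** X ** X)))"
    by simp
  also have "\<dots> = - 4 * trace (E ** X ** E ** Xi) - 2 * (E \<bullet> E)"
    unfolding dcube by (simp add: inner_add_right outer1 outer2)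
  finally show ?thesis
    using frob_conj_pd_sqrt_power2[OF X symE] by (simp add: frob_power2[of E] Xi_def)
qed

lemma has_vector_derivative_matrix_cube:
  fixes M :: "real \<Rightarrow> real^'m^'m"
  assumes "(M has_vector_derivative M') (at t within T)"
  shows "((\<lambda>s. M s ** M s ** M s) has_vector_derivative
    M t ** M t ** M' + M t ** M' ** M t + M' ** M t ** M t) (at t within T)"
proof -
  note product_rule = bounded_bilinear.has_vector_derivative[OF bounded_bilinear_matrix_matrix_mult]
  have "((\<lambda>s. M s ** M s) has_vector_derivative M t ** M' + M' ** M t) (at t within T)"
    using product_rule[OF assms assms] .
  from product_rule[OF this assms] show ?thesis
    by (simp add: matrix_add_rdistrib add.assoc)
qed

lemma has_real_derivative_frob_diff_power2:
  fixes F :: "real \<Rightarrow> real^'c^'r"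
  assumes "(F has_vector_derivative F') (at t within T)"
  shows "((\<lambda>s. (frob (C - F s))^2) has_real_derivative - 2 * ((C - F t) \<bullet> F')) (at t within T)"
proof -
  have "((\<lambda>s. C - F s) has_vector_derivative - F') (at t within T)"
    using has_vector_derivative_diff[OF has_vector_derivative_const assms] by simp
  from bounded_bilinear.has_vector_derivative[OF bounded_bilinear_inner this this]
  have "((\<lambda>s. (C - F s) \<bullet> (C - F s)) has_vector_derivative - 2 * ((C - F t) \<bullet> F')) (at t within T)"
    by (simp add: inner_commute)
  then show ?thesis
    by (simp add: frob_power2 has_real_derivative_iff_has_vector_derivative)
qed

lemma has_real_derivative_nonpos_imp_nonincreasing_on_interval:
  fixes g g' :: "real \<Rightarrow> real"
  assumes T: "is_interval T" "t\<^sub>0 \<in> T" "t \<in> T" "t\<^sub>0 \<le> t"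
    and deriv: "\<And>s. s \<in> T \<Longrightarrow> (g has_real_derivative g' s) (at s within T)"
    and nonpos: "\<And>s. s \<in> T \<Longrightarrow> g' s \<le> 0"
  shows "g t \<le> g t\<^sub>0"
proof -
  have sub: "{t\<^sub>0..t} \<subseteq> T"
    using T unfolding is_interval_1 by (meson atLeastAtMost_iff subsetI)
  show ?thesis
  proof (rule DERIV_nonpos_imp_decreasing_open[OF \<open>t\<^sub>0 \<le> t\<close>])
    fix s
    assume "t\<^sub>0 < s" "s < t"
    then have "s \<in> interior T"
      using interior_mono[OF sub] by auto
    then have "at s within T = at s"
      by (rule at_within_interior)
    moreover have "s \<in> T"
      using \<open>s \<in> interior T\<close> interior_subset by blast
    ultimately show "\<exists>y. DERIV g s :> y \<and> y \<le> 0"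
      using deriv[OF \<open>s \<in> T\<close>] nonpos[OF \<open>s \<in> T\<close>] by auto
  next
    show "continuous_on {t\<^sub>0..t} g"
    proof (rule DERIV_continuous_on)
      fix s
      assume "s \<in> {t\<^sub>0..t}"
      then have "s \<in> T"
        using sub by blast
      show "(g has_field_derivative g' s) (at s within {t\<^sub>0..t})"
        by (rule has_field_derivative_subset[OF deriv[OF \<open>s \<in> T\<close>] sub])
    qed
  qed
qed

(* f (t) exp (-a t) is nonincreasing. *)
lemma has_real_derivative_le_imp_exp_bound:
  fixes f f' :: "real \<Rightarrow> real"
  assumes T: "is_interval T" "t\<^sub>0 \<in> T" "t \<in> T" "t\<^sub>0 \<le> t"
    and deriv: "\<And>s. s \<in> T \<Longrightarrow> (f has_real_derivative f' s) (at s within T)"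
    and le: "\<And>s. s \<in> T \<Longrightarrow> f' s \<le> a * f s"
  shows "f t \<le> f t\<^sub>0 * exp (a * (t - t\<^sub>0))"
proof -
  define g where "g = (\<lambda>s. f s * exp (- a * s))"
  have "(g has_real_derivative (f' s - a * f s) * exp (- a * s)) (at s within T)" if "s \<in> T" for s
  proof -
    have "((\<lambda>s. exp (- a * s)) has_real_derivative exp (- a * s) * (- a)) (at s within T)"
      by (rule DERIV_chain2[OF DERIV_exp DERIV_cmult_Id])
    from DERIV_mult[OF deriv[OF that] this] show ?thesis
      unfolding g_def by (simp add: algebra_simps)
  qed
  moreover have "(f' s - a * f s) * exp (- a * s) \<le> 0" if "s \<in> T" for s
    using le[OF that] by (simp add: mult_nonpos_nonneg)
  ultimately have "g t \<le> g t\<^sub>0"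
    by (rule has_real_derivative_nonpos_imp_nonincreasing_on_interval[OF T])
  have "f t = g t * exp (a * t)"
    by (simp add: g_def mult.assoc exp_add[symmetric])
  also have "\<dots> \<le> g t\<^sub>0 * exp (a * t)"
    using \<open>g t \<le> g t\<^sub>0\<close> by simp
  also have "\<dots> = f t\<^sub>0 * exp (a * (t - t\<^sub>0))"
    by (simp add: g_def mult.assoc exp_add[symmetric] algebra_simps)
  finally show ?thesis .
qed

lemma L0_has_derivative_along_flow:
  fixes A :: "real^'n^'n" and W :: "real^'n^'k" and M :: "real \<Rightarrow> real^'k^'k"
  assumes A: "spd A" and M: "(M has_vector_derivative M') (at t within T)" and X: "spd (M t)"
    and flow: "\<tau> *\<^sub>R M' = matrix_inv (M t) ** W ** A ** transpose W ** matrix_inv (M t) - M t"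
  shows "((\<lambda>s. \<tau> * L0 A W (M s)) has_real_derivative
    - 4 * (frob (pd_sqrt (M t) ** (W ** A ** transpose W - M t ** M t ** M t)
                 ** matrix_inv (pd_sqrt (M t))))^2
    - 2 * L0 A W (M t)) (at t within T)"
proof -
  define C where "C = W ** A ** transpose W"
  have symC: "transpose C = C"
    using spd_symmetric[OF A] by (simp add: C_def matrix_transpose_mul matrix_mul_assoc)
  have flowC: "\<tau> *\<^sub>R M' = matrix_inv (M t) ** C ** matrix_inv (M t) - M t"
    using flow by (simp add: C_def matrix_mul_assoc)
  have "((\<lambda>s. L0 A W (M s)) has_real_derivative - 2 * ((C - M t ** M t ** M t) \<bullet>
      (M t ** M t ** M' + M t ** M' ** M t + M' ** M t ** M t))) (at t within T)"
    unfolding L0_def C_def[symmetric]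
    by (rule has_real_derivative_frob_diff_power2[OF has_vector_derivative_matrix_cube[OF M]])
  from DERIV_cmult[OF this, of \<tau>, unfolded cube_flow_energy_identity[OF X symC flowC]]
  show ?thesis
    by (simp only: L0_def C_def)
qed

theorem mainTheorem10:
  fixes A :: "real^'n^'n" and W :: "real^'n^'k" and \<tau> :: real
    and M M' :: "real \<Rightarrow> real^'k^'k" and T :: "real set"
  assumes dims: "CARD('n) > CARD('k)"
    and A_spd: "spd A"
    and tau_pos: "\<tau> > 0"
    and T_int: "is_interval T" and zero_T: "0 \<in> T"
    and M_deriv: "\<And>t. t \<in> T \<Longrightarrow> (M has_vector_derivative M' t) (at t within T)"
    and M'_cont: "continuous_on T M'"
    and M_spd: "\<And>t. t \<in> T \<Longrightarrow> spd (M t)"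
    and ode: "\<And>t. t \<in> T \<Longrightarrow>
        \<tau> *\<^sub>R M' t = matrix_inv (M t) ** W ** A ** transpose W ** matrix_inv (M t) - M t"
  shows "(\<forall>t\<in>T. ((\<lambda>s. \<tau> * L0 A W (M s)) has_real_derivative
            (- 4 * (frob (pd_sqrt (M t) ** (W ** A ** transpose W - M t ** M t ** M t)
                          ** matrix_inv (pd_sqrt (M t))))^2
             - 2 * L0 A W (M t))) (at t within T))
       \<and> (\<forall>t\<in>T. t \<ge> 0 \<longrightarrow> L0 A W (M t) \<le> L0 A W (M 0) * exp (- 2 * t / \<tau>))"
proof -
  define F where "F t = frob (pd_sqrt (M t) ** (W ** A ** transpose W - M t ** M t ** M t)
    ** matrix_inv (pd_sqrt (M t)))" for t
  have deriv: "((\<lambda>s. \<tau> * L0 A W (M s)) has_real_derivative - 4 * (F t)^2 - 2 * L0 A W (M t))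
      (at t within T)" if "t \<in> T" for t
    unfolding F_def
    by (rule L0_has_derivative_along_flow[OF A_spd M_deriv[OF that] M_spd[OF that] ode[OF that]])
  have decay: "- 4 * (F t)^2 - 2 * L0 A W (M t) \<le> - 2 / \<tau> * (\<tau> * L0 A W (M t))" for t
    using tau_pos by simp
  have "\<tau> * L0 A W (M t) \<le> \<tau> * L0 A W (M 0) * exp (- 2 / \<tau> * (t - 0))" if "t \<in> T" "0 \<le> t" for t
    by (rule has_real_derivative_le_imp_exp_bound[OF T_int zero_T that deriv decay])
  then have "L0 A W (M t) \<le> L0 A W (M 0) * exp (- 2 * t / \<tau>)" if "t \<in> T" "0 \<le> t" for t
    using that tau_pos by (simp add: mult.assoc)
  with deriv show ?thesis
    unfolding F_def by blast
qed

end
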